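(* Let $(X,d)$ be a separable metric space, $T\colon X\to X$ a Borel measurable map, $(s_n)_{n\ge1}$ a scale sequence, and $\phi(x,y)=\liminf_{n\to\infty}s_n\,d(T^nx,y)$. (1) If $(s_n)$ is monotone or steady, then for every $T$-invariant $T$-ergodic Borel probability measure $\mu$ and every $y\in X$, the function $x\mapsto\phi(x,y)$ is $\mu$-a.e. constant; if moreover $(s_n)$ is two-jumpy, this constant lies in $\{0,\infty\}$. (2) If $(s_n)$ is steady and $T$ is a local contraction mod $\nu$ for some $T$-invariant $T$-ergodic Borel probability measure $\nu$, then for every $x\in X$ the function $y\mapsto\phi(x,y)$ is $\nu$-a.e. constant. (3) If $(s_n)$ is nice, $\nu$ is a $T$-invariant, $T$-ergodic, decisive Borel probability measure, and $T$ is locally Lipschitz mod $\nu$, then for every $x\in X$ either $\phi(x,y)=0$ for $\nu$-a.e. $y$, or $\phi(x,y)=\infty$ for $\nu$-a.e. $y$.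
   Context: A scale sequence is a sequence of positive reals $s_n\to\infty$. It is monotone if $s_{n+1}\ge s_n$ for large $n$; steady if $s_{n+1}/s_n\to1$; two-jumpy if monotone and $\liminf_n s_{2n}/s_n>1$; bounded-ratio if $\sup_n s_{n+1}/s_n<\infty$; nice if two-jumpy and bounded-ratio. The dilation gauge is $D_T(x)=\limsup_{y\to x,\,y\in X} d(Ty,Tx)/d(y,x)$ if $x$ is a limit point of $X$ and $D_T(x)=0$ if $x$ is isolated. $T$ is a local contraction mod $\nu$ if $D_T\le1$ $\nu$-a.e., and locally Lipschitz mod $\nu$ if $D_T<\infty$ $\nu$-a.e. A measure $\nu$ is decisive if for every sequence $(x_n)$ in $X$ and every scale sequence $(s_n)$, $\liminf_n s_n d(x_n,x)\in\{0,\infty\}$ for $\nu$-a.e. $x$. *)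

theory Defs
  imports "HOL-Probability.Probability"
begin

text \<open>The metric space X is the whole carrier type 'a (a metric_space type).\<close>

definition scale_seq :: "(nat \<Rightarrow> real) \<Rightarrow> bool" where
  "scale_seq s \<longleftrightarrow> (\<forall>n. s n > 0) \<and> filterlim s at_top sequentially"

definition monotone_scale :: "(nat \<Rightarrow> real) \<Rightarrow> bool" where
  "monotone_scale s \<longleftrightarrow> (\<forall>\<^sub>F n in sequentially. s (Suc n) \<ge> s n)"

definition steady :: "(nat \<Rightarrow> real) \<Rightarrow> bool" where
  "steady s \<longleftrightarrow> (\<lambda>n. s (Suc n) / s n) \<longlonglongrightarrow> 1"

definition two_jumpy :: "(nat \<Rightarrow> real) \<Rightarrow> bool" where
  "two_jumpy s \<longleftrightarrow> monotone_scale s \<and>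
     liminf (\<lambda>n. ereal (s (2 * n) / s n)) > 1"

definition bounded_ratio :: "(nat \<Rightarrow> real) \<Rightarrow> bool" where
  "bounded_ratio s \<longleftrightarrow> bdd_above (range (\<lambda>n. s (Suc n) / s n))"

definition nice :: "(nat \<Rightarrow> real) \<Rightarrow> bool" where
  "nice s \<longleftrightarrow> two_jumpy s \<and> bounded_ratio s"

definition dilation_gauge :: "('a::metric_space \<Rightarrow> 'a) \<Rightarrow> 'a \<Rightarrow> ereal" where
  "dilation_gauge T x =
     (if x islimpt UNIV
      then Limsup (at x) (\<lambda>y. ereal (dist (T y) (T x) / dist y x))
      else 0)"

definition local_contraction_mod :: "('a::metric_space \<Rightarrow> 'a) \<Rightarrow> 'a measure \<Rightarrow> bool" where
  "local_contraction_mod T \<nu> \<longleftrightarrow> (AE x in \<nu>. dilation_gauge T x \<le> 1)"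

definition locally_lipschitz_mod :: "('a::metric_space \<Rightarrow> 'a) \<Rightarrow> 'a measure \<Rightarrow> bool" where
  "locally_lipschitz_mod T \<nu> \<longleftrightarrow> (AE x in \<nu>. dilation_gauge T x < \<infinity>)"

definition decisive :: "'a::metric_space measure \<Rightarrow> bool" where
  "decisive \<nu> \<longleftrightarrow> (\<forall>(xs :: nat \<Rightarrow> 'a) s. scale_seq s \<longrightarrow>
     (AE x in \<nu>. liminf (\<lambda>n. ereal (s n * dist (xs n) x)) \<in> {0, \<infinity>}))"

definition borel_prob :: "'a::topological_space measure \<Rightarrow> bool" where
  "borel_prob M \<longleftrightarrow> sets M = sets borel \<and> prob_space M"

definition invariant_measure :: "('a \<Rightarrow> 'a) \<Rightarrow> 'a measure \<Rightarrow> bool" where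
  "invariant_measure T M \<longleftrightarrow> T \<in> measurable M M \<and> distr M M T = M"

definition ergodic_measure :: "('a \<Rightarrow> 'a) \<Rightarrow> 'a measure \<Rightarrow> bool" where
  "ergodic_measure T M \<longleftrightarrow> (\<forall>A\<in>sets M. T -` A \<inter> space M = A \<longrightarrow>
      emeasure M A = 0 \<or> emeasure M A = 1)"

definition phi :: "(nat \<Rightarrow> real) \<Rightarrow> ('a::metric_space \<Rightarrow> 'a) \<Rightarrow> 'a \<Rightarrow> 'a \<Rightarrow> ereal" where
  "phi s T x y = liminf (\<lambda>n. ereal (s n * dist ((T ^^ n) x) y))"

end

theory Submission
  imports Defs
begin

(* Everything rests on how phi (x, y) changes when x or y is moved by T. Moving the point,
   phi (T x, y) <= phi (x, y) as soon as s n <= rho * s (n + 1) eventually for every rho > 1, which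
   holds for monotone and for steady scales. Moving the target, phi (x, T y) <= phi (x, y) where T is
   a local contraction and the scale is steady, and phi (x, y) = 0 forces phi (x, T y) = 0 where T is
   locally Lipschitz and the scale has bounded ratios. For an ergodic measure every a.e. forward
   invariant set is trivial, so every measurable f with f o T <= f a.e. is a.e. constant; this gives
   the constancy statements, and decisiveness turns the dichotomy "phi = 0 a.e. or not" into (3).

   A finite positive constant c in (1) is impossible for two-jumpy scales. They satisfy
   gamma * s k <= s n whenever N <= k and 2 k <= n, so a time n with s n * d (T^n x, y) < gamma * r
   puts about n/2 of the first n orbit points of x into the set A_N of points w with
   s k * d (T^k w, y) < r for some k >= N. For r < c these sets shrink to a null set, whereas by the
   maximal ergodic inequality the points whose orbits visit A_N with frequency above 1/4 have measure
   at most 4 * mu (A_N) < 1. *)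

section \<open>Iterates of measure-preserving maps\<close>

lemma measurable_funpow: "T \<in> measurable M M \<Longrightarrow> T ^^ n \<in> measurable M M"
  by (induction n) (auto intro: measurable_comp[where N = M] simp del: funpow.simps simp: funpow_Suc_right)

lemma invariant_measure_funpow:
  assumes T: "invariant_measure T M"
  shows "invariant_measure (T ^^ n) M"
proof (induction n)
  case 0
  show ?case by (simp add: invariant_measure_def id_def)
next
  case (Suc n)
  have T1: "T \<in> measurable M M" "distr M M T = M" and Tn: "T ^^ n \<in> measurable M M" "distr M M (T ^^ n) = M"
    using T Suc by (simp_all add: invariant_measure_def)
  have "distr M M (T ^^ Suc n) = distr (distr M M (T ^^ n)) M T"
    by (simp add: distr_distr T1(1) Tn(1))
  also have "\<dots> = M" using T1 Tn by simp
  finally have "distr M M (T ^^ Suc n) = M" .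
  with measurable_funpow[OF T1(1)] show ?case unfolding invariant_measure_def by blast
qed

lemma emeasure_vimage_invariant:
  assumes "invariant_measure T M" "A \<in> sets M"
  shows "emeasure M (T -` A \<inter> space M) = emeasure M A"
  using assms emeasure_distr[of T M M A] by (simp add: invariant_measure_def)

lemma AE_invariant:
  assumes "invariant_measure T M" "{x \<in> space M. P x} \<in> sets M" "AE x in M. P x"
  shows "AE x in M. P (T x)"
proof -
  have T: "T \<in> measurable M M" "distr M M T = M" using assms(1) by (simp_all add: invariant_measure_def)
  have "AE x in distr M M T. P x" unfolding T(2) by (rule assms(3))
  then show ?thesis using AE_distr_iff[OF T(1) assms(2)] by simp
qed

lemma integrable_invariant_iff:
  fixes f :: "'a \<Rightarrow> 'b::{banach, second_countable_topology}"
  assumes "invariant_measure T M" "f \<in> borel_measurable M"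
  shows "integrable M (\<lambda>x. f (T x)) \<longleftrightarrow> integrable M f"
  using assms integrable_distr_eq[of T M M f] by (simp add: invariant_measure_def)

lemma integral_invariant:
  fixes f :: "'a \<Rightarrow> 'b::{banach, second_countable_topology}"
  assumes "invariant_measure T M" "f \<in> borel_measurable M"
  shows "integral\<^sup>L M (\<lambda>x. f (T x)) = integral\<^sup>L M f"
  using assms integral_distr[of T M M f] by (simp add: invariant_measure_def)

section \<open>Ergodicity\<close>

lemma emeasure_eventually_in_le:
  assumes T: "invariant_measure T M" and A[measurable]: "A \<in> sets M"
  shows "emeasure M {x \<in> space M. \<forall>\<^sub>F n in sequentially. (T ^^ n) x \<in> A} \<le> emeasure M A"
proof -
  have [measurable]: "T ^^ n \<in> measurable M M" for n
    using invariant_measure_funpow[OF T] by (simp add: invariant_measure_def)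
  define C where "C N = {x \<in> space M. \<forall>n\<ge>N. (T ^^ n) x \<in> A}" for N
  have C_sets: "C N \<in> sets M" for N unfolding C_def by measurable
  have "{x \<in> space M. \<forall>\<^sub>F n in sequentially. (T ^^ n) x \<in> A} = (\<Union>N. C N)"
    unfolding C_def eventually_sequentially by blast
  moreover have "incseq C" by (rule monoI) (auto simp: C_def)
  ultimately have "emeasure M {x \<in> space M. \<forall>\<^sub>F n in sequentially. (T ^^ n) x \<in> A} = (SUP N. emeasure M (C N))"
    using C_sets by (simp add: SUP_emeasure_incseq image_subset_iff)
  also have "\<dots> \<le> emeasure M A"
  proof (rule SUP_least)
    fix N
    have "emeasure M (C N) \<le> emeasure M ((T ^^ N) -` A \<inter> space M)"
      by (intro emeasure_mono) (auto simp: C_def)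
    then show "emeasure M (C N) \<le> emeasure M A"
      using emeasure_vimage_invariant[OF invariant_measure_funpow[OF T] A] by simp
  qed
  finally show ?thesis .
qed

(* ergodic_measure only controls strictly invariant sets; the set of points whose orbit eventually
   stays in A is one, and it agrees with A up to a null set. *)
lemma ergodic_AE_forward_invariant_set:
  assumes T: "invariant_measure T M" and E: "ergodic_measure T M" and A[measurable]: "A \<in> sets M"
    and fwd: "AE x in M. x \<in> A \<longrightarrow> T x \<in> A"
  shows "emeasure M A = 0 \<or> emeasure M A = 1"
proof -
  have T1[measurable]: "T \<in> measurable M M" using T by (simp add: invariant_measure_def)
  have [measurable]: "T ^^ n \<in> measurable M M" for n by (rule measurable_funpow[OF T1])
  define B where "B = {x \<in> space M. \<forall>\<^sub>F n in sequentially. (T ^^ n) x \<in> A}"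
  have B_sets: "B \<in> sets M" unfolding B_def by measurable
  have "(\<forall>\<^sub>F n in sequentially. (T ^^ n) (T x) \<in> A) \<longleftrightarrow> (\<forall>\<^sub>F n in sequentially. (T ^^ n) x \<in> A)" for x
    using eventually_sequentially_Suc[of "\<lambda>n. (T ^^ n) x \<in> A"]
    by (simp del: funpow.simps add: funpow_Suc_right)
  then have "T -` B \<inter> space M = B"
    using measurable_space[OF T1] by (auto simp: B_def)
  then have B01: "emeasure M B = 0 \<or> emeasure M B = 1"
    using E B_sets by (simp add: ergodic_measure_def)
  have "AE x in M. \<forall>n. (T ^^ n) x \<in> A \<longrightarrow> T ((T ^^ n) x) \<in> A"
    unfolding AE_all_countable
    by (intro allI AE_invariant[OF invariant_measure_funpow[OF T] _ fwd]) measurable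
  then have "AE x in M. x \<in> A \<longrightarrow> x \<in> B"
  proof (rule AE_mp[OF _ AE_I2], intro impI)
    fix x assume x: "x \<in> space M" and step: "\<forall>n. (T ^^ n) x \<in> A \<longrightarrow> T ((T ^^ n) x) \<in> A"
      and "x \<in> A"
    then have "(T ^^ n) x \<in> A" for n by (induction n) auto
    then show "x \<in> B" using x by (simp add: B_def)
  qed
  then have "emeasure M A \<le> emeasure M B" using B_sets by (rule emeasure_mono_AE)
  moreover have "emeasure M B \<le> emeasure M A"
    unfolding B_def by (rule emeasure_eventually_in_le[OF T A])
  ultimately show ?thesis using B01 by auto
qed

lemma ereal_rat_between:
  fixes a b :: ereal
  assumes "a < b"
  obtains r :: rat where "a < ereal (of_rat r)" "ereal (of_rat r) < b"
proof -
  obtain z where z: "a < ereal z" "ereal z < b" using ereal_dense2[OF assms] by blast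
  obtain z' where z': "z < z'" "ereal z' < b" using ereal_dense2[OF z(2)] by auto
  obtain q where q: "q \<in> \<rat>" "z < q" "q < z'" using Rats_dense_in_real[OF z'(1)] by blast
  then obtain r where "q = of_rat r" by (blast elim: Rats_cases)
  moreover have "a < ereal q" using z(1) q(2) less_trans[of a "ereal z" "ereal q"] by simp
  moreover have "ereal q < b" using z'(2) q(3) less_trans[of "ereal q" "ereal z'" b] by simp
  ultimately show thesis using that by blast
qed

lemma (in prob_space) AE_eq_const_of_sublevel_sets_0_1:
  fixes f :: "'a \<Rightarrow> ereal"
  assumes f[measurable]: "f \<in> borel_measurable M"
    and triv: "\<And>r::rat. emeasure M {x \<in> space M. f x < of_rat r} = 0 \<or>
                        emeasure M {x \<in> space M. f x < of_rat r} = 1"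
  shows "\<exists>c. AE x in M. f x = c"
proof -
  define A where "A r = {x \<in> space M. f x < of_rat r}" for r
  have A_sets: "A r \<in> sets M" for r unfolding A_def by measurable
  define good where "good x \<longleftrightarrow> (\<forall>r. x \<in> A r \<longleftrightarrow> emeasure M (A r) = 1)" for x
  have "AE x in M. x \<in> A r \<longleftrightarrow> emeasure M (A r) = 1" for r
  proof (cases "emeasure M (A r) = 1")
    case True
    then have "AE x in M. x \<in> A r" using A_sets by (simp add: AE_in_set_eq_1 measure_def)
    then show ?thesis using True by (auto elim: eventually_mono)
  next
    case False
    then have "A r \<in> null_sets M" using triv[of r] A_sets by (simp add: A_def null_sets_def)
    then show ?thesis using False by (auto elim: eventually_mono dest: AE_not_in)
  qed
  then have AE_good: "AE x in M. good x" by (simp add: good_def AE_all_countable)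
  then obtain x0 where x0: "x0 \<in> space M" "good x0"
    using eventually_happens'[OF ae_filter_bot eventually_conj[OF AE_space]] by blast
  have no_gap: "\<not> f x < f x'" if "x \<in> space M" "good x" "good x'" for x x'
  proof
    assume "f x < f x'"
    then obtain r where r: "f x < of_rat r" "of_rat r < f x'" by (rule ereal_rat_between)
    then have "x \<in> A r" using that(1) by (simp add: A_def)
    then have "x' \<in> A r" using that(2,3) by (simp add: good_def)
    then show False using r(2) by (auto simp: A_def dest: order.asym)
  qed
  have "AE x in M. f x = f x0"
    using AE_good
  proof (rule AE_mp[OF _ AE_I2], intro impI)
    fix x assume "x \<in> space M" "good x"
    then have "\<not> f x < f x0" "\<not> f x0 < f x" using no_gap x0 by blast+
    then show "f x = f x0" by (meson linorder_neqE)
  qed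
  then show ?thesis by blast
qed

lemma ergodic_AE_const_of_AE_decreasing:
  fixes f :: "'a \<Rightarrow> ereal"
  assumes M: "prob_space M" and T: "invariant_measure T M" and E: "ergodic_measure T M"
    and f[measurable]: "f \<in> borel_measurable M" and decr: "AE x in M. f (T x) \<le> f x"
  shows "\<exists>c. AE x in M. f x = c"
proof (rule prob_space.AE_eq_const_of_sublevel_sets_0_1[OF M f])
  have T1: "T \<in> measurable M M" using T by (simp add: invariant_measure_def)
  fix r :: rat
  show "emeasure M {x \<in> space M. f x < of_rat r} = 0 \<or> emeasure M {x \<in> space M. f x < of_rat r} = 1"
  proof (rule ergodic_AE_forward_invariant_set[OF T E])
    show "{x \<in> space M. f x < of_rat r} \<in> sets M" by measurable
    show "AE x in M. x \<in> {x \<in> space M. f x < of_rat r} \<longrightarrow> T x \<in> {x \<in> space M. f x < of_rat r}"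
    proof (rule AE_mp[OF decr AE_I2], intro impI)
      fix x assume "x \<in> space M" "f (T x) \<le> f x" "x \<in> {x \<in> space M. f x < of_rat r}"
      then show "T x \<in> {x \<in> space M. f x < of_rat r}"
        using measurable_space[OF T1] le_less_trans[of "f (T x)" "f x"] by auto
    qed
  qed
qed

lemma frequently_less_of_liminf_less:
  fixes b :: "nat \<Rightarrow> real"
  assumes "liminf (\<lambda>n. ereal (b n)) < ereal r"
  shows "\<exists>\<^sub>F n in sequentially. b n < r"
proof (rule ccontr)
  assume "\<not> (\<exists>\<^sub>F n in sequentially. b n < r)"
  then have "\<forall>\<^sub>F n in sequentially. ereal r \<le> ereal (b n)" by (simp add: not_frequently not_less)
  then have "ereal r \<le> liminf (\<lambda>n. ereal (b n))" by (rule Liminf_bounded)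
  with assms show False by simp
qed

lemma frequently_sequentially_Suc:
  "(\<exists>\<^sub>F n in sequentially. P (Suc n)) \<longleftrightarrow> (\<exists>\<^sub>F n in sequentially. P n)"
  unfolding frequently_def eventually_sequentially_Suc[of "\<lambda>n. \<not> P n"] ..

lemma liminf_le_liminf_of_frequently_less:
  fixes a b :: "nat \<Rightarrow> real"
  assumes b_nonneg: "\<And>n. 0 \<le> b n"
    and freq: "\<And>r \<rho>. 0 < r \<Longrightarrow> 1 < \<rho> \<Longrightarrow> (\<exists>\<^sub>F n in sequentially. b n < r) \<Longrightarrow>
                   (\<exists>\<^sub>F n in sequentially. a n < \<rho> * r)"
  shows "liminf (\<lambda>n. ereal (a n)) \<le> liminf (\<lambda>n. ereal (b n))"
proof (rule ccontr)
  assume "\<not> ?thesis"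
  then have "liminf (\<lambda>n. ereal (b n)) < liminf (\<lambda>n. ereal (a n))" by simp
  then obtain r1 where r1: "liminf (\<lambda>n. ereal (b n)) < ereal r1" "ereal r1 < liminf (\<lambda>n. ereal (a n))"
    using ereal_dense2 by blast
  from r1(2) obtain r2 where "ereal r1 < ereal r2" and r2: "ereal r2 < liminf (\<lambda>n. ereal (a n))"
    using ereal_dense2 by blast
  then have "r1 < r2" by simp
  have "0 \<le> liminf (\<lambda>n. ereal (b n))" using b_nonneg by (intro Liminf_bounded always_eventually) simp
  then have "0 < r1" using r1(1) by (metis ereal_less(2) le_less_trans)
  then have "\<exists>\<^sub>F n in sequentially. a n < (r2 / r1) * r1"
    using \<open>r1 < r2\<close> by (intro freq frequently_less_of_liminf_less[OF r1(1)]) auto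
  then have "\<exists>\<^sub>F n in sequentially. a n < r2" using \<open>0 < r1\<close> by simp
  moreover have "\<forall>\<^sub>F n in sequentially. \<not> a n < r2"
    using less_LiminfD[OF r2] by (rule eventually_mono) simp
  ultimately show False by (simp add: frequently_def)
qed

lemma liminf_eq_0_of_frequently_less:
  fixes a b :: "nat \<Rightarrow> real"
  assumes a_nonneg: "\<And>n. 0 \<le> a n" and b_nonneg: "\<And>n. 0 \<le> b n" and "0 < K"
    and freq: "\<And>r. 0 < r \<Longrightarrow> (\<exists>\<^sub>F n in sequentially. b n < r) \<Longrightarrow>
                   (\<exists>\<^sub>F n in sequentially. a n < K * r)"
    and b0: "liminf (\<lambda>n. ereal (b n)) = 0"
  shows "liminf (\<lambda>n. ereal (a n)) = 0"
proof -
  have "liminf (\<lambda>n. ereal (a n)) \<le> liminf (\<lambda>n. ereal (K * b n))"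
  proof (rule liminf_le_liminf_of_frequently_less)
    show "0 \<le> K * b n" for n using \<open>0 < K\<close> b_nonneg by simp
    fix r \<rho> :: real assume "0 < r" "1 < \<rho>" and close: "\<exists>\<^sub>F n in sequentially. K * b n < r"
    have "\<exists>\<^sub>F n in sequentially. b n < r / K"
      using close by (rule frequently_elim1) (use \<open>0 < K\<close> in \<open>simp add: field_simps\<close>)
    with \<open>0 < K\<close> \<open>0 < r\<close> have "\<exists>\<^sub>F n in sequentially. a n < K * (r / K)" by (intro freq) simp_all
    then show "\<exists>\<^sub>F n in sequentially. a n < \<rho> * r"
      using \<open>0 < K\<close> mult_strict_right_mono[OF \<open>1 < \<rho>\<close> \<open>0 < r\<close>] by (auto elim: frequently_elim1)
  qed
  also have "\<dots> = ereal K * liminf (\<lambda>n. ereal (b n))"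
    using Liminf_ereal_mult_left[of sequentially K "\<lambda>n. ereal (b n)"] \<open>0 < K\<close> by simp
  finally have "liminf (\<lambda>n. ereal (a n)) \<le> 0" using b0 by simp
  moreover have "0 \<le> liminf (\<lambda>n. ereal (a n))" using a_nonneg by (intro Liminf_bounded always_eventually) simp
  ultimately show ?thesis by simp
qed

section \<open>Scale sequences\<close>

lemma scale_seq_pos: "scale_seq s \<Longrightarrow> 0 < s n"
  by (simp add: scale_seq_def)

lemma scale_seq_dist_nonneg: "scale_seq s \<Longrightarrow> 0 \<le> s n * dist z w"
  using scale_seq_pos[of s n] by simp

lemma scale_seq_ratio_lower_bound:
  assumes sc: "scale_seq s" and ms: "monotone_scale s \<or> steady s" and "1 < \<rho>"
  shows "\<forall>\<^sub>F n in sequentially. s n \<le> \<rho> * s (Suc n)"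
  using ms
proof
  assume "monotone_scale s"
  then show ?thesis unfolding monotone_scale_def
    by (rule eventually_mono) (use \<open>1 < \<rho>\<close> scale_seq_pos[OF sc, of "Suc _"] in \<open>auto intro: order_trans\<close>)
next
  assume "steady s"
  then have "\<forall>\<^sub>F n in sequentially. 1 / \<rho> < s (Suc n) / s n"
    unfolding steady_def by (rule order_tendstoD) (use \<open>1 < \<rho>\<close> in simp)
  then show ?thesis
    by (rule eventually_mono) (use \<open>1 < \<rho>\<close> scale_seq_pos[OF sc] in \<open>simp add: field_simps\<close>)
qed

lemma steady_ratio_upper_bound:
  assumes sc: "scale_seq s" and "steady s" and "1 < \<rho>"
  shows "\<forall>\<^sub>F n in sequentially. s (Suc n) \<le> \<rho> * s n"
proof -
  have "\<forall>\<^sub>F n in sequentially. s (Suc n) / s n < \<rho>"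
    using \<open>steady s\<close> unfolding steady_def by (rule order_tendstoD) (use \<open>1 < \<rho>\<close> in simp)
  then show ?thesis
    by (rule eventually_mono) (use scale_seq_pos[OF sc] in \<open>simp add: field_simps\<close>)
qed

lemma bounded_ratio_upper_bound:
  assumes sc: "scale_seq s" and "bounded_ratio s"
  obtains K where "0 < K" "\<And>n. s (Suc n) \<le> K * s n"
proof -
  obtain K where K: "\<And>n. s (Suc n) / s n \<le> K"
    using \<open>bounded_ratio s\<close> by (auto simp: bounded_ratio_def bdd_above_def)
  have "s (Suc n) \<le> max K 1 * s n" for n
  proof -
    have "s (Suc n) \<le> K * s n" using K[of n] scale_seq_pos[OF sc, of n] by (simp add: field_simps)
    also have "\<dots> \<le> max K 1 * s n" using scale_seq_pos[OF sc, of n] by (intro mult_right_mono) auto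
    finally show ?thesis .
  qed
  then show thesis by (intro that[of "max K 1"]) auto
qed

lemma two_jumpy_doubling:
  assumes sc: "scale_seq s" and "two_jumpy s"
  obtains \<gamma> N where "1 < \<gamma>" "\<And>k n. N \<le> k \<Longrightarrow> 2 * k \<le> n \<Longrightarrow> \<gamma> * s k \<le> s n"
proof -
  obtain N1 where mono: "\<And>n. N1 \<le> n \<Longrightarrow> s n \<le> s (Suc n)"
    using \<open>two_jumpy s\<close> by (auto simp: two_jumpy_def monotone_scale_def eventually_sequentially)
  have mono_le: "s a \<le> s b" if "N1 \<le> a" "a \<le> b" for a b
    using \<open>a \<le> b\<close> by (induction b rule: dec_induct) (use mono that in \<open>auto intro: order_trans\<close>)
  have "1 < liminf (\<lambda>n. ereal (s (2 * n) / s n))" using \<open>two_jumpy s\<close> by (simp add: two_jumpy_def)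
  then obtain \<gamma> where \<gamma>: "1 < ereal \<gamma>" "ereal \<gamma> < liminf (\<lambda>n. ereal (s (2 * n) / s n))"
    using ereal_dense2 by blast
  obtain N2 where jump: "\<And>m. N2 \<le> m \<Longrightarrow> \<gamma> < s (2 * m) / s m"
    using less_LiminfD[OF \<gamma>(2)] by (auto simp: eventually_sequentially)
  have "1 < \<gamma>" using \<gamma>(1) by (simp add: one_ereal_def)
  show thesis
  proof (rule that[OF \<open>1 < \<gamma>\<close>])
    fix k n assume "max N1 N2 \<le> k" "2 * k \<le> n"
    then have "N2 \<le> n div 2" using div_le_mono[OF \<open>2 * k \<le> n\<close>, of 2] by simp
    from \<open>max N1 N2 \<le> k\<close> \<open>2 * k \<le> n\<close> have "\<gamma> * s k \<le> \<gamma> * s (n div 2)"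
      using \<open>1 < \<gamma>\<close> by (intro mult_left_mono mono_le) auto
    also have "\<dots> < s (2 * (n div 2))"
      using jump[OF \<open>N2 \<le> n div 2\<close>] scale_seq_pos[OF sc, of "n div 2"]
      by (simp add: field_simps)
    also have "\<dots> \<le> s n"
      using \<open>max N1 N2 \<le> k\<close> \<open>2 * k \<le> n\<close> by (intro mono_le) auto
    finally show "\<gamma> * s k \<le> s n" by simp
  qed
qed

section \<open>Moving the point and the target\<close>

lemma dilation_gauge_less_imp_lipschitz_near:
  assumes "dilation_gauge T y < ereal L"
  obtains \<delta> where "0 < \<delta>" "\<And>z. dist z y < \<delta> \<Longrightarrow> dist (T z) (T y) \<le> L * dist z y"
proof -
  have "\<forall>\<^sub>F z in at y. dist (T z) (T y) / dist z y < L"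
  proof (cases "y islimpt UNIV")
    case True
    then have "Limsup (at y) (\<lambda>z. ereal (dist (T z) (T y) / dist z y)) < ereal L"
      using assms by (simp add: dilation_gauge_def)
    then show ?thesis by (auto dest: Limsup_lessD elim: eventually_mono)
  next
    case False
    then show ?thesis by (auto simp: islimpt_iff_eventually elim: eventually_mono)
  qed
  then obtain \<delta> where "0 < \<delta>" and \<delta>: "\<And>z. z \<noteq> y \<Longrightarrow> dist z y < \<delta> \<Longrightarrow> dist (T z) (T y) / dist z y < L"
    by (auto simp: eventually_at)
  have "dist (T z) (T y) \<le> L * dist z y" if "dist z y < \<delta>" for z
    using \<delta>[OF _ that] by (cases "z = y") (auto simp: field_simps)
  with \<open>0 < \<delta>\<close> show thesis by (rule that)
qed

lemma frequently_close_shift_point: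
  assumes ratio: "\<forall>\<^sub>F n in sequentially. s n \<le> \<rho> * s (Suc n)" and "0 < \<rho>"
    and close: "\<exists>\<^sub>F n in sequentially. s n * dist ((T ^^ n) x) y < r"
  shows "\<exists>\<^sub>F n in sequentially. s n * dist ((T ^^ n) (T x)) y < \<rho> * r"
proof -
  have "\<exists>\<^sub>F n in sequentially. s (Suc n) * dist ((T ^^ Suc n) x) y < r"
    using frequently_sequentially_Suc[of "\<lambda>n. s n * dist ((T ^^ n) x) y < r"] close by blast
  then have "\<exists>\<^sub>F n in sequentially. s n \<le> \<rho> * s (Suc n) \<and> s (Suc n) * dist ((T ^^ Suc n) x) y < r"
    using ratio by (rule frequently_eventually_conj)
  then show ?thesis
  proof (rule frequently_elim1)
    fix n assume n: "s n \<le> \<rho> * s (Suc n) \<and> s (Suc n) * dist ((T ^^ Suc n) x) y < r"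
    have "(T ^^ Suc n) x = (T ^^ n) (T x)" by (simp add: funpow_Suc_right del: funpow.simps)
    moreover have "s n * dist ((T ^^ n) (T x)) y \<le> \<rho> * s (Suc n) * dist ((T ^^ n) (T x)) y"
      using n by (intro mult_right_mono) auto
    ultimately have "s n * dist ((T ^^ n) (T x)) y \<le> \<rho> * (s (Suc n) * dist ((T ^^ Suc n) x) y)"
      by simp
    also have "\<dots> < \<rho> * r" using n \<open>0 < \<rho>\<close> by simp
    finally show "s n * dist ((T ^^ n) (T x)) y < \<rho> * r" .
  qed
qed

lemma frequently_close_shift_target:
  assumes sc: "scale_seq s" and "0 < \<rho>" "0 < L" "0 < \<delta>" "0 < r"
    and lip: "\<And>z. dist z y < \<delta> \<Longrightarrow> dist (T z) (T y) \<le> L * dist z y"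
    and ratio: "\<forall>\<^sub>F n in sequentially. s (Suc n) \<le> \<rho> * s n"
    and close: "\<exists>\<^sub>F n in sequentially. s n * dist ((T ^^ n) x) y < r"
  shows "\<exists>\<^sub>F n in sequentially. s n * dist ((T ^^ n) x) (T y) < \<rho> * L * r"
proof -
  have "\<forall>\<^sub>F n in sequentially. r / \<delta> < s n"
    using sc by (simp add: scale_seq_def filterlim_at_top_dense)
  then have "\<exists>\<^sub>F n in sequentially. (r / \<delta> < s n \<and> s (Suc n) \<le> \<rho> * s n) \<and> s n * dist ((T ^^ n) x) y < r"
    using close ratio by (intro frequently_eventually_conj eventually_conj)
  then have "\<exists>\<^sub>F n in sequentially. s (Suc n) * dist ((T ^^ Suc n) x) (T y) < \<rho> * L * r"
  proof (rule frequently_elim1)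
    fix n assume n: "(r / \<delta> < s n \<and> s (Suc n) \<le> \<rho> * s n) \<and> s n * dist ((T ^^ n) x) y < r"
    define z where "z = (T ^^ n) x"
    have "0 < s n" by (rule scale_seq_pos[OF sc])
    have "s n * dist z y < s n * \<delta>" using n \<open>0 < \<delta>\<close> by (simp add: z_def field_simps)
    then have "dist z y < \<delta>" using \<open>0 < s n\<close> by (simp add: mult_less_cancel_left_pos)
    have "s (Suc n) * dist (T z) (T y) \<le> \<rho> * s n * (L * dist z y)"
      using n \<open>0 < \<rho>\<close> \<open>0 < s n\<close> lip[OF \<open>dist z y < \<delta>\<close>]
      by (intro mult_mono) auto
    also have "\<dots> = \<rho> * L * (s n * dist z y)" by simp
    also have "\<dots> < \<rho> * L * r" using n \<open>0 < \<rho>\<close> \<open>0 < L\<close> unfolding z_def by simp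
    finally show "s (Suc n) * dist ((T ^^ Suc n) x) (T y) < \<rho> * L * r" by (simp add: z_def)
  qed
  then show ?thesis by (rule frequently_sequentially_Suc[THEN iffD1])
qed

lemma phi_nonneg: "scale_seq s \<Longrightarrow> 0 \<le> phi s T x y"
  unfolding phi_def by (intro Liminf_bounded always_eventually) (simp add: scale_seq_dist_nonneg)

lemma phi_apply_point_le:
  assumes sc: "scale_seq s" and ms: "monotone_scale s \<or> steady s"
  shows "phi s T (T x) y \<le> phi s T x y"
  unfolding phi_def
proof (rule liminf_le_liminf_of_frequently_less)
  show "0 \<le> s n * dist ((T ^^ n) x) y" for n by (rule scale_seq_dist_nonneg[OF sc])
  fix r \<rho> :: real assume "0 < r" "1 < \<rho>" "\<exists>\<^sub>F n in sequentially. s n * dist ((T ^^ n) x) y < r"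
  then show "\<exists>\<^sub>F n in sequentially. s n * dist ((T ^^ n) (T x)) y < \<rho> * r"
    by (intro frequently_close_shift_point scale_seq_ratio_lower_bound[OF sc ms]) auto
qed

lemma phi_apply_target_le:
  assumes sc: "scale_seq s" and "steady s" and contr: "dilation_gauge T y \<le> 1"
  shows "phi s T x (T y) \<le> phi s T x y"
  unfolding phi_def
proof (rule liminf_le_liminf_of_frequently_less)
  show "0 \<le> s n * dist ((T ^^ n) x) y" for n by (rule scale_seq_dist_nonneg[OF sc])
  fix r \<rho> :: real assume "0 < r" "1 < \<rho>" and close: "\<exists>\<^sub>F n in sequentially. s n * dist ((T ^^ n) x) y < r"
  define q where "q = sqrt \<rho>" \<comment> \<open>one factor for the scale ratio, one for the Lipschitz constant\<close>
  have "1 < q" "q * q = \<rho>" using \<open>1 < \<rho>\<close> by (simp_all add: q_def)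
  then have "dilation_gauge T y < ereal q" using contr by (simp add: one_ereal_def le_less_trans)
  then obtain \<delta> where "0 < \<delta>" and lip: "\<And>z. dist z y < \<delta> \<Longrightarrow> dist (T z) (T y) \<le> q * dist z y"
    using dilation_gauge_less_imp_lipschitz_near by blast
  have "\<exists>\<^sub>F n in sequentially. s n * dist ((T ^^ n) x) (T y) < q * q * r"
    by (rule frequently_close_shift_target[OF sc _ _ \<open>0 < \<delta>\<close> \<open>0 < r\<close> lip
          steady_ratio_upper_bound[OF sc \<open>steady s\<close> \<open>1 < q\<close>] close])
       (use \<open>1 < q\<close> in auto)
  then show "\<exists>\<^sub>F n in sequentially. s n * dist ((T ^^ n) x) (T y) < \<rho> * r"
    using \<open>q * q = \<rho>\<close> by simp
qed

lemma phi_apply_target_eq_0: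
  assumes sc: "scale_seq s" and "bounded_ratio s" and lip: "dilation_gauge T y < \<infinity>"
    and zero: "phi s T x y = 0"
  shows "phi s T x (T y) = 0"
proof -
  obtain K where "0 < K" and K: "\<And>n. s (Suc n) \<le> K * s n"
    using bounded_ratio_upper_bound[OF sc \<open>bounded_ratio s\<close>] by blast
  obtain L0 where "dilation_gauge T y < ereal L0" using ereal_dense2[OF lip] by blast
  then have "dilation_gauge T y < ereal (max L0 1)" by (rule less_le_trans) simp
  then obtain \<delta> where "0 < \<delta>" and lip: "\<And>z. dist z y < \<delta> \<Longrightarrow> dist (T z) (T y) \<le> max L0 1 * dist z y"
    using dilation_gauge_less_imp_lipschitz_near by blast
  have ratio: "\<forall>\<^sub>F n in sequentially. s (Suc n) \<le> K * s n" using K by (simp add: always_eventually)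
  have freq: "\<exists>\<^sub>F n in sequentially. s n * dist ((T ^^ n) x) (T y) < K * max L0 1 * r"
    if "0 < r" "\<exists>\<^sub>F n in sequentially. s n * dist ((T ^^ n) x) y < r" for r
    by (rule frequently_close_shift_target[OF sc \<open>0 < K\<close> _ \<open>0 < \<delta>\<close> that(1) lip ratio that(2)]) simp
  show ?thesis unfolding phi_def
    by (rule liminf_eq_0_of_frequently_less[OF scale_seq_dist_nonneg[OF sc] scale_seq_dist_nonneg[OF sc]
          _ freq zero[unfolded phi_def]])
       (use \<open>0 < K\<close> in simp)
qed

lemma borel_measurable_dist_funpow:
  fixes T :: "'a::metric_space \<Rightarrow> 'a"
  assumes "T \<in> borel_measurable borel"
  shows "(\<lambda>x. dist ((T ^^ n) x) y) \<in> borel_measurable borel"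
  by (rule borel_measurable_continuous_on[OF _ measurable_funpow[OF assms]]) (intro continuous_intros)

lemma borel_measurable_phi_point:
  fixes T :: "'a::metric_space \<Rightarrow> 'a"
  assumes "T \<in> borel_measurable borel"
  shows "(\<lambda>x. phi s T x y) \<in> borel_measurable borel"
  using borel_measurable_dist_funpow[OF assms] unfolding phi_def by measurable

lemma borel_measurable_phi_target: "(\<lambda>y. phi s T x y) \<in> borel_measurable borel"
proof -
  have [measurable]: "dist z \<in> borel_measurable borel" for z :: 'a
    by (intro borel_measurable_continuous_onI continuous_intros)
  show ?thesis unfolding phi_def by measurable
qed

lemma borel_prob_measurable:
  assumes "borel_prob M" "f \<in> borel_measurable borel"
  shows "f \<in> borel_measurable M"
proof -
  have "sets M = sets borel" using assms(1) by (simp add: borel_prob_def)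
  with assms(2) show ?thesis using measurable_cong_sets[of M borel borel borel] by simp
qed

section \<open>A maximal ergodic inequality\<close>

lemma sum_atLeastLessThan_le_split:
  fixes f :: "nat \<Rightarrow> real"
  assumes "\<And>j. 0 \<le> f j" "p \<le> m"
  shows "(\<Sum>j\<in>{p..<L}. f j) \<le> (\<Sum>j\<in>{p..<m}. f j) + (\<Sum>j\<in>{m..<L}. f j)"
proof (cases "m \<le> L")
  case True
  then show ?thesis using sum.atLeastLessThan_concat[OF \<open>p \<le> m\<close> True, of f] by simp
next
  case False
  then have "(\<Sum>j\<in>{p..<L}. f j) \<le> (\<Sum>j\<in>{p..<m}. f j)" using assms by (intro sum_mono2) auto
  then show ?thesis using False by simp
qed

(* Cover [p, L) from the left by the windows [j, j + n) witnessing bad j: they are disjoint and lie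
   in [p, L + K). *)
lemma greedy_cover_sum_le:
  fixes c :: "nat \<Rightarrow> real"
  assumes c_nonneg: "\<And>i. 0 \<le> c i" and "0 < \<alpha>"
    and cover: "\<And>j. bad j \<Longrightarrow> \<exists>n\<in>{1..K}. \<alpha> * real n < (\<Sum>i\<in>{j..<j+n}. c i)"
  shows "\<alpha> * (\<Sum>j\<in>{p..<L}. of_bool (bad j)) \<le> (\<Sum>j\<in>{p..<L+K}. c j)"
proof (induction "L - p" arbitrary: p rule: less_induct)
  case less
  have IH: "\<alpha> * (\<Sum>j\<in>{q..<L}. of_bool (bad j)) \<le> (\<Sum>j\<in>{q..<L+K}. c j)" if "L - q < L - p" for q
    using less that by blast
  show ?case
  proof (cases "p < L")
    case False
    then show ?thesis using c_nonneg by (simp add: sum_nonneg)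
  next
    case True
    show ?thesis
    proof (cases "bad p")
      case False
      have "\<alpha> * (\<Sum>j\<in>{p..<L}. of_bool (bad j)) = \<alpha> * (\<Sum>j\<in>{Suc p..<L}. of_bool (bad j))"
        using \<open>p < L\<close> False by (subst sum.atLeast_Suc_lessThan) auto
      also have "\<dots> \<le> (\<Sum>j\<in>{Suc p..<L+K}. c j)" using \<open>p < L\<close> by (intro IH) simp
      also have "\<dots> \<le> (\<Sum>j\<in>{p..<L+K}. c j)" using c_nonneg by (intro sum_mono2) auto
      finally show ?thesis .
    next
      case True
      then obtain n where n: "1 \<le> n" "n \<le> K" "\<alpha> * real n < (\<Sum>i\<in>{p..<p+n}. c i)"
        using cover[OF True] by auto
      have "(\<Sum>j\<in>{p..<p+n}. of_bool (bad j)) \<le> (\<Sum>j\<in>{p..<p+n}. 1 :: real)"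
        by (intro sum_mono) simp
      then have "(\<Sum>j\<in>{p..<L}. of_bool (bad j)) \<le> real n + (\<Sum>j\<in>{p+n..<L}. of_bool (bad j))"
        using sum_atLeastLessThan_le_split[of "\<lambda>j. of_bool (bad j)" p "p + n" L] by simp
      then have "\<alpha> * (\<Sum>j\<in>{p..<L}. of_bool (bad j)) \<le> \<alpha> * real n + \<alpha> * (\<Sum>j\<in>{p+n..<L}. of_bool (bad j))"
        using \<open>0 < \<alpha>\<close> by (simp add: distrib_left[symmetric])
      also have "\<dots> \<le> (\<Sum>j\<in>{p..<p+n}. c j) + (\<Sum>j\<in>{p+n..<L+K}. c j)"
      proof -
        have "\<alpha> * (\<Sum>j\<in>{p+n..<L}. of_bool (bad j)) \<le> (\<Sum>j\<in>{p+n..<L+K}. c j)"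
          using \<open>p < L\<close> n(1) by (intro IH diff_less_mono2) auto
        with n(3) show ?thesis by linarith
      qed
      also have "\<dots> = (\<Sum>j\<in>{p..<L+K}. c j)"
        using \<open>p < L\<close> n by (intro sum.atLeastLessThan_concat) auto
      finally show ?thesis .
    qed
  qed
qed

lemma le_of_forall_nat_mult_le:
  fixes x y c :: real
  assumes "\<And>L::nat. real L * x \<le> real L * y + c"
  shows "x \<le> y"
proof (rule ccontr)
  assume "\<not> x \<le> y"
  obtain L :: nat where "c / (x - y) < real L" using reals_Archimedean2 by blast
  then have "c < real L * (x - y)" using \<open>\<not> x \<le> y\<close> by (simp add: field_simps)
  with assms[of L] show False by (simp add: algebra_simps)
qed

lemma integral_sum_indicator_funpow:
  assumes M: "finite_measure M" and T: "invariant_measure T M" and B: "B \<in> sets M"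
  shows "integrable M (\<lambda>x. \<Sum>j<L. indicator B ((T ^^ j) x) :: real)"
    and "integral\<^sup>L M (\<lambda>x. \<Sum>j<L. indicator B ((T ^^ j) x) :: real) = real L * measure M B"
proof -
  have fin: "emeasure M B < \<infinity>" using finite_measure.emeasure_finite[OF M] by (simp add: less_top)
  have ind: "(indicator B :: 'a \<Rightarrow> real) \<in> borel_measurable M" using B by simp
  have integrable_j: "integrable M (\<lambda>x. indicator B ((T ^^ j) x) :: real)" for j
    using integrable_invariant_iff[OF invariant_measure_funpow[OF T] ind] integrable_real_indicator[OF B fin]
    by simp
  then show "integrable M (\<lambda>x. \<Sum>j<L. indicator B ((T ^^ j) x) :: real)" by simp
  have "integral\<^sup>L M (\<lambda>x. indicator B ((T ^^ j) x) :: real) = measure M B" for j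
    using integral_invariant[OF invariant_measure_funpow[OF T] ind] B fin by simp
  with integrable_j show "integral\<^sup>L M (\<lambda>x. \<Sum>j<L. indicator B ((T ^^ j) x) :: real) = real L * measure M B"
    by (simp add: integral_sum)
qed

lemma maximal_inequality_bounded:
  assumes M: "finite_measure M" and T: "invariant_measure T M" and A[measurable]: "A \<in> sets M" and "0 < \<alpha>"
  shows "\<alpha> * measure M {x \<in> space M. \<exists>n\<in>{1..K}. \<alpha> * real n < (\<Sum>i<n. indicator A ((T ^^ i) x))}
           \<le> measure M A"
    (is "\<alpha> * measure M ?B \<le> _")
proof -
  have T1[measurable]: "T \<in> measurable M M" using T by (simp add: invariant_measure_def)
  have [measurable]: "T ^^ n \<in> measurable M M" for n by (rule measurable_funpow[OF T1])
  have B[measurable]: "?B \<in> sets M" by measurable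
  have pointwise: "\<alpha> * (\<Sum>j<L. indicator ?B ((T ^^ j) x)) \<le> (\<Sum>j<L+K. indicator A ((T ^^ j) x))"
    if "x \<in> space M" for x L
  proof -
    have "(\<Sum>i<n. indicator A ((T ^^ i) ((T ^^ j) x))) = (\<Sum>i\<in>{j..<j+n}. indicator A ((T ^^ i) x) :: real)"
      for n j
      using sum.shift_bounds_nat_ivl[of "\<lambda>i. indicator A ((T ^^ i) x) :: real" 0 j n]
      by (simp add: atLeast0LessThan funpow_add add.commute)
    then have "\<alpha> * (\<Sum>j\<in>{0..<L}. of_bool ((T ^^ j) x \<in> ?B)) \<le> (\<Sum>j\<in>{0..<L+K}. indicator A ((T ^^ j) x))"
      by (intro greedy_cover_sum_le \<open>0 < \<alpha>\<close>) auto
    then show ?thesis by (simp add: atLeast0LessThan indicator_def)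
  qed
  have integrated: "\<alpha> * (real L * measure M ?B) \<le> real (L + K) * measure M A" for L
  proof -
    have "\<alpha> * (real L * measure M ?B) = integral\<^sup>L M (\<lambda>x. \<alpha> * (\<Sum>j<L. indicator ?B ((T ^^ j) x)))"
      using integral_sum_indicator_funpow(2)[OF M T B] by simp
    also have "\<dots> \<le> integral\<^sup>L M (\<lambda>x. \<Sum>j<L+K. indicator A ((T ^^ j) x))"
      using integral_sum_indicator_funpow(1)[OF M T] pointwise by (intro integral_mono) auto
    also have "\<dots> = real (L + K) * measure M A" by (rule integral_sum_indicator_funpow(2)[OF M T A])
    finally show ?thesis .
  qed
  show ?thesis
  proof (rule le_of_forall_nat_mult_le)
    fix L :: nat
    show "real L * (\<alpha> * measure M ?B) \<le> real L * measure M A + real K * measure M A"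
      using integrated[of L] by (simp add: algebra_simps)
  qed
qed

lemma maximal_inequality:
  assumes M: "finite_measure M" and T: "invariant_measure T M" and A[measurable]: "A \<in> sets M" and "0 < \<alpha>"
  shows "\<alpha> * measure M {x \<in> space M. \<exists>n\<ge>1. \<alpha> * real n < (\<Sum>i<n. indicator A ((T ^^ i) x))} \<le> measure M A"
proof -
  define B where "B K = {x \<in> space M. \<exists>n\<in>{1..K}. \<alpha> * real n < (\<Sum>i<n. indicator A ((T ^^ i) x))}" for K
  have T1[measurable]: "T \<in> measurable M M" using T by (simp add: invariant_measure_def)
  have [measurable]: "T ^^ n \<in> measurable M M" for n by (rule measurable_funpow[OF T1])
  have "B K \<in> sets M" for K unfolding B_def by measurable
  then have "range B \<subseteq> sets M" by auto
  moreover have "incseq B" by (rule monoI) (auto simp: B_def)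
  ultimately have "(\<lambda>K. \<alpha> * measure M (B K)) \<longlonglongrightarrow> \<alpha> * measure M (\<Union>K. B K)"
    by (intro tendsto_mult_left finite_measure.finite_Lim_measure_incseq[OF M])
  moreover have "(\<Union>K. B K) = {x \<in> space M. \<exists>n\<ge>1. \<alpha> * real n < (\<Sum>i<n. indicator A ((T ^^ i) x))}"
    by (auto simp: B_def) (meson atLeastAtMost_iff order_refl)
  ultimately show ?thesis
    using maximal_inequality_bounded[OF M T A \<open>0 < \<alpha>\<close>] unfolding B_def by (intro LIMSEQ_le_const2) auto
qed

section \<open>Two-jumpy scales\<close>

lemma (in finite_measure) measure_exists_ge_tendsto_0:
  assumes sets: "\<And>k. {w \<in> space M. P k w} \<in> sets M"
    and AE: "AE w in M. \<forall>\<^sub>F k in sequentially. \<not> P k w"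
  shows "(\<lambda>N. measure M {w \<in> space M. \<exists>k\<ge>N. P k w}) \<longlonglongrightarrow> 0"
proof -
  have [measurable]: "Measurable.pred M (P k)" for k using sets by (simp add: pred_def)
  define D where "D N = {w \<in> space M. \<exists>k\<ge>N. P k w}" for N
  have D_sets: "D N \<in> sets M" for N unfolding D_def by measurable
  have "decseq D" by (rule antimonoI) (auto simp: D_def intro: order_trans)
  then have lim: "(\<lambda>N. measure M (D N)) \<longlonglongrightarrow> measure M (\<Inter>N. D N)"
    using D_sets by (intro finite_Lim_measure_decseq) auto
  have "(\<Inter>N. D N) \<in> sets M" using D_sets by (intro sets.countable_INT) auto
  moreover have "AE w in M. w \<notin> (\<Inter>N. D N)"
    by (rule AE_mp[OF AE AE_I2]) (auto simp: D_def eventually_sequentially)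
  ultimately have "(\<Inter>N. D N) \<in> null_sets M" by (simp add: AE_iff_null_sets)
  with lim show ?thesis by (simp add: D_def measure_eq_0_null_sets)
qed

lemma frequent_visits_of_doubling:
  fixes T :: "'a::metric_space \<Rightarrow> 'a"
  assumes "0 < \<gamma>" and doubling: "\<And>k n. N \<le> k \<Longrightarrow> 2 * k \<le> n \<Longrightarrow> \<gamma> * s k \<le> s n"
    and close: "\<exists>\<^sub>F n in sequentially. s n * dist ((T ^^ n) x) y < \<gamma> * r"
    and visit: "\<And>i k. N \<le> k \<Longrightarrow> s k * dist ((T ^^ k) ((T ^^ i) x)) y < r \<Longrightarrow> (T ^^ i) x \<in> A"
  shows "\<exists>n\<ge>1. 1/4 * real n < (\<Sum>i<n. indicator A ((T ^^ i) x))"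
proof -
  obtain n where n: "4 * N + 4 \<le> n" "s n * dist ((T ^^ n) x) y < \<gamma> * r"
    using close by (auto simp: frequently_sequentially)
  define I where "I = {n - n div 2..<n - N}"
  have in_A: "(T ^^ i) x \<in> A" if "i \<in> I" for i
  proof -
    define k where "k = n - i"
    have k: "N \<le> k" "2 * k \<le> n" "k + i = n" using that n(1) by (auto simp: I_def k_def)
    have "\<gamma> * (s k * dist ((T ^^ n) x) y) \<le> s n * dist ((T ^^ n) x) y"
      using mult_right_mono[OF doubling[OF k(1,2)] zero_le_dist] by (simp add: mult.assoc)
    with n(2) have "\<gamma> * (s k * dist ((T ^^ n) x) y) < \<gamma> * r" by linarith
    then have "s k * dist ((T ^^ n) x) y < r" using \<open>0 < \<gamma>\<close> by (simp add: mult_less_cancel_left_pos)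
    moreover have "(T ^^ k) ((T ^^ i) x) = (T ^^ n) x" using k(3) by (metis comp_apply funpow_add)
    ultimately show ?thesis using visit[OF k(1)] by simp
  qed
  have "real (card I) = (\<Sum>i\<in>I. indicator A ((T ^^ i) x))" using in_A by simp
  also have "\<dots> \<le> (\<Sum>i<n. indicator A ((T ^^ i) x))" by (intro sum_mono2) (auto simp: I_def)
  finally have "real (card I) \<le> (\<Sum>i<n. indicator A ((T ^^ i) x))" .
  moreover have "n < 4 * card I" using n(1) by (simp add: I_def)
  then have "1/4 * real n < real (card I)" by linarith
  moreover have "1 \<le> n" using n(1) by simp
  ultimately show ?thesis by (intro exI[of _ n]) auto
qed

lemma measure_orbit_close_after_tendsto_0:
  fixes T :: "'a::metric_space \<Rightarrow> 'a"
  assumes M: "borel_prob M" and Tb: "T \<in> borel_measurable borel"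
    and far: "AE x in M. ereal r < phi s T x y"
  shows "(\<lambda>N. measure M {w \<in> space M. \<exists>k\<ge>N. s k * dist ((T ^^ k) w) y < r}) \<longlonglongrightarrow> 0"
proof -
  interpret prob_space M using M by (simp add: borel_prob_def)
  have [measurable]: "(\<lambda>w. dist ((T ^^ k) w) y) \<in> borel_measurable M" for k
    by (rule borel_prob_measurable[OF M borel_measurable_dist_funpow[OF Tb]])
  show ?thesis
  proof (rule measure_exists_ge_tendsto_0)
    show "{w \<in> space M. s k * dist ((T ^^ k) w) y < r} \<in> sets M" for k by measurable
    show "AE w in M. \<forall>\<^sub>F k in sequentially. \<not> s k * dist ((T ^^ k) w) y < r"
    proof (rule AE_mp[OF far AE_I2], intro impI)
      fix w assume "ereal r < phi s T w y"
      from less_LiminfD[OF this[unfolded phi_def]]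
      show "\<forall>\<^sub>F k in sequentially. \<not> s k * dist ((T ^^ k) w) y < r"
        by (rule eventually_mono) simp
    qed
  qed
qed

lemma AE_frequent_close_visits:
  fixes T :: "'a::metric_space \<Rightarrow> 'a"
  assumes T: "invariant_measure T M" and "0 < \<gamma>"
    and doubling: "\<And>k n. N \<le> k \<Longrightarrow> 2 * k \<le> n \<Longrightarrow> \<gamma> * s k \<le> s n"
    and near: "AE x in M. phi s T x y < ereal (\<gamma> * r)"
  shows "AE x in M. \<exists>n\<ge>1. 1/4 * real n <
           (\<Sum>i<n. indicator {w \<in> space M. \<exists>k\<ge>N. s k * dist ((T ^^ k) w) y < r} ((T ^^ i) x))"
proof (rule AE_mp[OF near AE_I2], intro impI)
  fix x assume x: "x \<in> space M" and "phi s T x y < ereal (\<gamma> * r)"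
  then have close: "\<exists>\<^sub>F n in sequentially. s n * dist ((T ^^ n) x) y < \<gamma> * r"
    by (intro frequently_less_of_liminf_less) (simp add: phi_def)
  have "(T ^^ i) x \<in> space M" for i
    using T measurable_space[OF measurable_funpow x] by (simp add: invariant_measure_def)
  then show "\<exists>n\<ge>1. 1/4 * real n <
      (\<Sum>i<n. indicator {w \<in> space M. \<exists>k\<ge>N. s k * dist ((T ^^ k) w) y < r} ((T ^^ i) x))"
    by (intro frequent_visits_of_doubling[OF \<open>0 < \<gamma>\<close> doubling close]) auto
qed

lemma phi_not_AE_eq_positive_real:
  fixes T :: "'a::metric_space \<Rightarrow> 'a"
  assumes M: "borel_prob M" and T: "invariant_measure T M" and Tb: "T \<in> borel_measurable borel"
    and sc: "scale_seq s" and "two_jumpy s" and "0 < c"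
  shows "\<not> (AE x in M. phi s T x y = ereal c)"
proof
  assume c: "AE x in M. phi s T x y = ereal c"
  interpret prob_space M using M by (simp add: borel_prob_def)
  obtain \<gamma> N0 where "1 < \<gamma>" and doubling: "\<And>k n. N0 \<le> k \<Longrightarrow> 2 * k \<le> n \<Longrightarrow> \<gamma> * s k \<le> s n"
    using two_jumpy_doubling[OF sc \<open>two_jumpy s\<close>] by blast
  define r where "r = 2 * c / (1 + \<gamma>)"
  have "r < c" "c < \<gamma> * r" using \<open>0 < c\<close> \<open>1 < \<gamma>\<close> by (simp_all add: r_def field_simps)
  have Tn[measurable]: "T ^^ n \<in> measurable M M" for n
    using T by (simp add: invariant_measure_def measurable_funpow)
  have [measurable]: "(\<lambda>w. dist ((T ^^ k) w) y) \<in> borel_measurable M" for k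
    by (rule borel_prob_measurable[OF M borel_measurable_dist_funpow[OF Tb]])
  define A where "A N = {w \<in> space M. \<exists>k\<ge>N. s k * dist ((T ^^ k) w) y < r}" for N
  have A_sets[measurable]: "A N \<in> sets M" for N unfolding A_def by measurable
  have "AE x in M. ereal r < phi s T x y" using c by (rule eventually_mono) (use \<open>r < c\<close> in simp)
  then have "(\<lambda>N. measure M (A N)) \<longlonglongrightarrow> 0"
    unfolding A_def by (rule measure_orbit_close_after_tendsto_0[OF M Tb])
  then have "\<forall>\<^sub>F N in sequentially. measure M (A N) < 1/4" by (rule order_tendstoD(2)) simp
  then obtain N1 where N1: "\<And>N. N1 \<le> N \<Longrightarrow> measure M (A N) < 1/4" by (auto simp: eventually_sequentially)
  define N where "N = max N0 N1"
  have "N0 \<le> N" "measure M (A N) < 1/4" using N1 by (simp_all add: N_def)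
  have doubling_N: "\<gamma> * s k \<le> s n" if "N \<le> k" "2 * k \<le> n" for k n
    using doubling[of k n] that \<open>N0 \<le> N\<close> by simp
  define Bad where "Bad = {x \<in> space M. \<exists>n\<ge>1. 1/4 * real n < (\<Sum>i<n. indicator (A N) ((T ^^ i) x))}"
  have "Bad \<in> sets M" unfolding Bad_def by measurable
  have "AE x in M. phi s T x y < ereal (\<gamma> * r)"
    using c by (rule eventually_mono) (use \<open>c < \<gamma> * r\<close> in simp)
  with \<open>1 < \<gamma>\<close> have "AE x in M. x \<in> Bad"
    using AE_frequent_close_visits[OF T _ doubling_N] AE_space unfolding Bad_def A_def by auto
  then have "measure M Bad = 1" using \<open>Bad \<in> sets M\<close> by (simp add: AE_in_set_eq_1)
  moreover have "1/4 * measure M Bad \<le> measure M (A N)"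
    unfolding Bad_def by (rule maximal_inequality[OF finite_measure_axioms T A_sets]) simp
  ultimately show False using \<open>measure M (A N) < 1/4\<close> by simp
qed

lemma phi_AE_eq_const_two_jumpy:
  fixes T :: "'a::metric_space \<Rightarrow> 'a"
  assumes M: "borel_prob M" and T: "invariant_measure T M" and Tb: "T \<in> borel_measurable borel"
    and sc: "scale_seq s" and tj: "two_jumpy s" and c: "AE x in M. phi s T x y = c"
  shows "c \<in> {0, \<infinity>}"
proof -
  have "AE x in M. 0 \<le> c" using c by (rule eventually_mono) (use phi_nonneg[OF sc] in metis)
  then have "0 \<le> c" using M by (simp add: borel_prob_def prob_space.AE_const)
  show ?thesis
  proof (cases c)
    case (real r)
    with \<open>0 \<le> c\<close> c phi_not_AE_eq_positive_real[OF M T Tb sc tj, of r y] have "r = 0" by force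
    then show ?thesis using real by (simp add: zero_ereal_def)
  qed (use \<open>0 \<le> c\<close> in auto)
qed

lemma phi_AE_const_point:
  fixes T :: "'a::metric_space \<Rightarrow> 'a"
  assumes M: "borel_prob M" and T: "invariant_measure T M" and E: "ergodic_measure T M"
    and Tb: "T \<in> borel_measurable borel" and sc: "scale_seq s" and ms: "monotone_scale s \<or> steady s"
  shows "\<exists>c. AE x in M. phi s T x y = c"
  using M phi_apply_point_le[OF sc ms]
  by (intro ergodic_AE_const_of_AE_decreasing[OF _ T E]
      borel_prob_measurable[OF M borel_measurable_phi_point[OF Tb]]) (auto simp: borel_prob_def)

lemma phi_AE_const_target:
  fixes T :: "'a::metric_space \<Rightarrow> 'a"
  assumes M: "borel_prob M" and T: "invariant_measure T M" and E: "ergodic_measure T M"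
    and sc: "scale_seq s" and "steady s" and contr: "local_contraction_mod T M"
  shows "\<exists>c. AE y in M. phi s T x y = c"
proof (rule ergodic_AE_const_of_AE_decreasing[OF _ T E])
  show "prob_space M" using M by (simp add: borel_prob_def)
  show "(\<lambda>y. phi s T x y) \<in> borel_measurable M"
    by (rule borel_prob_measurable[OF M borel_measurable_phi_target])
  show "AE y in M. phi s T x (T y) \<le> phi s T x y"
    using contr unfolding local_contraction_mod_def
    by (rule eventually_mono) (rule phi_apply_target_le[OF sc \<open>steady s\<close>])
qed

lemma phi_AE_0_or_infinity_target:
  fixes T :: "'a::metric_space \<Rightarrow> 'a"
  assumes M: "borel_prob M" and T: "invariant_measure T M" and E: "ergodic_measure T M"
    and sc: "scale_seq s" and "bounded_ratio s" and dec: "decisive M" and lip: "locally_lipschitz_mod T M"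
  shows "(AE y in M. phi s T x y = 0) \<or> (AE y in M. phi s T x y = \<infinity>)"
proof -
  interpret prob_space M using M by (simp add: borel_prob_def)
  have [measurable]: "(\<lambda>y. phi s T x y) \<in> borel_measurable M"
    by (rule borel_prob_measurable[OF M borel_measurable_phi_target])
  define Z where "Z = {y \<in> space M. phi s T x y = 0}"
  have Z_sets: "Z \<in> sets M" unfolding Z_def by measurable
  have "AE y in M. y \<in> Z \<longrightarrow> T y \<in> Z"
    using lip unfolding locally_lipschitz_mod_def
    by (rule AE_mp[OF _ AE_I2])
       (use T phi_apply_target_eq_0[OF sc \<open>bounded_ratio s\<close>] in
         \<open>auto simp: Z_def invariant_measure_def intro: measurable_space\<close>)
  then have "emeasure M Z = 0 \<or> emeasure M Z = 1"
    by (rule ergodic_AE_forward_invariant_set[OF T E Z_sets])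
  then show ?thesis
  proof
    assume "emeasure M Z = 1"
    then have "AE y in M. y \<in> Z" using Z_sets by (simp add: AE_in_set_eq_1 measure_def)
    then show ?thesis by (auto simp: Z_def elim: eventually_mono)
  next
    assume "emeasure M Z = 0"
    then have "AE y in M. y \<notin> Z" using Z_sets by (simp add: AE_iff_null_sets[symmetric] null_sets_def)
    moreover have "AE y in M. phi s T x y \<in> {0, \<infinity>}"
      using dec[unfolded decisive_def, rule_format, of s "\<lambda>n. (T ^^ n) x"] sc by (simp add: phi_def)
    ultimately have "AE y in M. phi s T x y = \<infinity>"
      using AE_space by eventually_elim (auto simp: Z_def)
    then show ?thesis ..
  qed
qed

theorem proposition6p3:
  fixes T :: "'a::metric_space \<Rightarrow> 'a" and s :: "nat \<Rightarrow> real"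
  assumes sep: "separable_space (euclidean :: 'a topology)"
    and Tmeas: "T \<in> borel_measurable borel"
    and sc: "scale_seq s"
  shows
    "((monotone_scale s \<or> steady s) \<longrightarrow>
       (\<forall>\<mu> y. borel_prob \<mu> \<and> invariant_measure T \<mu> \<and> ergodic_measure T \<mu> \<longrightarrow>
          (\<exists>c. (AE x in \<mu>. phi s T x y = c) \<and> (two_jumpy s \<longrightarrow> c \<in> {0, \<infinity>}))))
     \<and> (\<forall>\<nu>. steady s \<and> borel_prob \<nu> \<and> invariant_measure T \<nu> \<and> ergodic_measure T \<nu>
           \<and> local_contraction_mod T \<nu> \<longrightarrow>
          (\<forall>x. \<exists>c. AE y in \<nu>. phi s T x y = c))
     \<and> (\<forall>\<nu>. nice s \<and> borel_prob \<nu> \<and> invariant_measure T \<nu> \<and> ergodic_measure T \<nu>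
           \<and> decisive \<nu> \<and> locally_lipschitz_mod T \<nu> \<longrightarrow>
          (\<forall>x. (AE y in \<nu>. phi s T x y = 0) \<or> (AE y in \<nu>. phi s T x y = \<infinity>)))"
proof (intro conjI allI impI)
  fix \<mu> y
  assume "monotone_scale s \<or> steady s" and \<mu>: "borel_prob \<mu> \<and> invariant_measure T \<mu> \<and> ergodic_measure T \<mu>"
  then obtain c where "AE x in \<mu>. phi s T x y = c"
    using phi_AE_const_point[OF _ _ _ Tmeas sc] by blast
  then show "\<exists>c. (AE x in \<mu>. phi s T x y = c) \<and> (two_jumpy s \<longrightarrow> c \<in> {0, \<infinity>})"
    using \<mu> phi_AE_eq_const_two_jumpy[OF _ _ Tmeas sc] by blast
next
  fix \<nu> x
  assume "steady s \<and> borel_prob \<nu> \<and> invariant_measure T \<nu> \<and> ergodic_measure T \<nu> \<and> local_contraction_mod T \<nu>"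
  then show "\<exists>c. AE y in \<nu>. phi s T x y = c" using phi_AE_const_target[OF _ _ _ sc] by blast
next
  fix \<nu> x
  assume "nice s \<and> borel_prob \<nu> \<and> invariant_measure T \<nu> \<and> ergodic_measure T \<nu> \<and> decisive \<nu>
    \<and> locally_lipschitz_mod T \<nu>"
  then show "(AE y in \<nu>. phi s T x y = 0) \<or> (AE y in \<nu>. phi s T x y = \<infinity>)"
    using phi_AE_0_or_infinity_target[OF _ _ _ sc] by (auto simp: nice_def)
qed

end
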